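(* Let $H$ be a planar graph that does not contain any removable cycle of length at most $10$, and let $K$ be a $4$-clique in $H$. Then: (1) every simple cycle $C$ in $H$ of length $5$ shares no edge with $K$; (2) every $4$-clique $K'$ in $H$ with $K'\neq K$ shares no edge with $K$; (3) every simple cycle $C$ in $H$ of length $3$ shares no edge with $K$ unless $V(C)\subseteq V(K)$.
   Context: A simple cycle in a graph $H$ is a sequence $(v_1,\dots,v_k)$ of $k>2$ distinct vertices with consecutive vertices adjacent and $v_k$ adjacent to $v_1$; $V(C)$, $E(C)$ are its vertex and edge sets and its length is $|V(C)|$. A $4$-clique is a subgraph isomorphic to the complete graph on $4$ vertices. A simple cycle $C$ in $H$ is removable if the induced subgraph $H[V(C)]$ is neither isomorphic to a complete graph nor to a cycle graph of odd length. *)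

theory Defs
  imports "HOL-Analysis.Analysis"
begin

definition simple_graph :: "'a set \<Rightarrow> 'a set set \<Rightarrow> bool" where
  "simple_graph V E \<longleftrightarrow> finite V \<and> (\<forall>e\<in>E. \<exists>u v. e = {u, v} \<and> u \<noteq> v \<and> u \<in> V \<and> v \<in> V)"

definition planar :: "'a set \<Rightarrow> 'a set set \<Rightarrow> bool" where
  "planar V E \<longleftrightarrow> (\<exists>(f :: 'a \<Rightarrow> complex) (g :: 'a set \<Rightarrow> real \<Rightarrow> complex).
      inj_on f V \<and>
      (\<forall>e\<in>E. arc (g e) \<and> {pathstart (g e), pathfinish (g e)} = f ` e
              \<and> path_image (g e) \<inter> f ` V = f ` e) \<and>
      (\<forall>e\<in>E. \<forall>e'\<in>E. e \<noteq> e' \<longrightarrow> path_image (g e) \<inter> path_image (g e') = f ` (e \<inter> e')))"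

definition cycle_edges :: "'a list \<Rightarrow> 'a set set" where
  "cycle_edges vs = {{vs ! i, vs ! ((i + 1) mod length vs)} | i. i < length vs}"

definition simple_cycle :: "'a set \<Rightarrow> 'a set set \<Rightarrow> 'a list \<Rightarrow> bool" where
  "simple_cycle V E vs \<longleftrightarrow> length vs > 2 \<and> distinct vs \<and> set vs \<subseteq> V \<and> cycle_edges vs \<subseteq> E"

definition induced_edges :: "'a set set \<Rightarrow> 'a set \<Rightarrow> 'a set set" where
  "induced_edges E S = {e \<in> E. e \<subseteq> S}"

definition is_complete_graph :: "'a set \<Rightarrow> 'a set set \<Rightarrow> bool" where
  "is_complete_graph S F \<longleftrightarrow> F = {{u, v} | u v. u \<in> S \<and> v \<in> S \<and> u \<noteq> v}"

definition is_odd_cycle_graph :: "'a set \<Rightarrow> 'a set set \<Rightarrow> bool" where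
  "is_odd_cycle_graph S F \<longleftrightarrow> (\<exists>ws. distinct ws \<and> length ws > 2 \<and> odd (length ws)
      \<and> set ws = S \<and> F = cycle_edges ws)"

definition removable :: "'a set \<Rightarrow> 'a set set \<Rightarrow> 'a list \<Rightarrow> bool" where
  "removable V E vs \<longleftrightarrow> simple_cycle V E vs \<and>
     \<not> is_complete_graph (set vs) (induced_edges E (set vs)) \<and>
     \<not> is_odd_cycle_graph (set vs) (induced_edges E (set vs))"

definition four_clique :: "'a set \<Rightarrow> 'a set set \<Rightarrow> 'a set \<Rightarrow> bool" where
  "four_clique V E Q \<longleftrightarrow> Q \<subseteq> V \<and> card Q = 4 \<and> (\<forall>u\<in>Q. \<forall>v\<in>Q. u \<noteq> v \<longrightarrow> {u, v} \<in> E)"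

definition clique_edges :: "'a set \<Rightarrow> 'a set set" where
  "clique_edges Q = {{u, v} | u v. u \<in> Q \<and> v \<in> Q \<and> u \<noteq> v}"

end

theory Submission
  imports Defs
begin

text \<open>A vertex w outside the 4-clique K cannot be adjacent to two clique vertices a, b: for each of
  the two remaining clique vertices z the 4-cycle a w b z is even and not removable, hence induces a
  complete graph, so w is adjacent to all of K and K plus w is a K5. A 5-cycle through an edge of K
  is ruled out in the same way with 6-cycles; the three claims follow.

  That K5 is not planar is shown with the Jordan curve theorem. In a drawing of K5 no vertex d lies
  inside the triangle of three others a, b, c: splitting the interior first by the path a d b and
  then by the edge c d traps the fifth vertex in a region whose boundary misses one of its edges to
  a, b, c. On the other hand the inversion about a point inside the triangle abc maps the drawing to
  a drawing in which d lies inside the image of the triangle.\<close>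

lemma connected_subset_inside:
  assumes "connected S" "S \<inter> G = {}" "x \<in> S" "x \<in> inside G"
  shows "S \<subseteq> inside G"
proof
  fix y assume y: "y \<in> S"
  show "y \<in> inside G"
  proof (rule ccontr)
    assume "y \<notin> inside G"
    with y assms(2) have "y \<in> outside G" using inside_Un_outside by blast
    then show False using inside_outside_intersect_connected[OF assms(1)] assms y by blast
  qed
qed

lemma pathfinish_inside_if_disjoint:
  assumes "path g" "path_image g \<inter> G = {}" "pathstart g \<in> inside G"
  shows "pathfinish g \<in> inside G"
  using connected_subset_inside[OF connected_path_image[OF assms(1)] assms(2)]
    assms(3) pathstart_in_path_image pathfinish_in_path_image by blast

lemma arc_point_in_inside_iff:
  fixes g :: "real \<Rightarrow> complex"
  assumes "arc g" "path_image g \<inter> G \<subseteq> {pathstart g}" "0 < t" "t \<le> 1"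
  shows "g t \<in> inside G \<longleftrightarrow> pathfinish g \<in> inside G"
proof -
  let ?S = "g ` {t..1}"
  have "path_image (subpath t 1 g) = ?S"
    using assms(3,4) by (simp add: path_image_subpath)
  moreover have "path (subpath t 1 g)"
    using assms by (simp add: arc_imp_path path_subpath)
  ultimately have "connected ?S" by (metis connected_path_image)
  moreover have "?S \<inter> G = {}"
  proof (rule ccontr)
    assume "?S \<inter> G \<noteq> {}"
    then obtain s where s: "s \<in> {t..1}" "g s \<in> G" by blast
    moreover have "g s \<in> path_image g" using s assms(3) by (auto simp: path_image_def)
    ultimately have "g s = g 0" using assms(2) unfolding pathstart_def by blast
    with assms(1,3) s have "s = 0" by (auto simp: arc_def inj_on_def)
    with s assms(3) show False by auto
  qed
  moreover have "g t \<in> ?S" "g 1 \<in> ?S" using assms by auto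
  ultimately show ?thesis
    using connected_subset_inside unfolding pathfinish_def by blast
qed

lemma arc_disjoint_inside:
  fixes g :: "real \<Rightarrow> complex"
  assumes "arc g" "path_image g \<inter> G \<subseteq> {pathstart g}"
    and "pathstart g \<notin> inside G" "pathfinish g \<notin> inside G"
  shows "path_image g \<inter> inside G = {}"
proof (rule ccontr)
  assume "path_image g \<inter> inside G \<noteq> {}"
  then obtain t where t: "t \<in> {0..1}" "g t \<in> inside G" unfolding path_image_def by blast
  have "t \<noteq> 0" using t assms(3) unfolding pathstart_def by blast
  with t arc_point_in_inside_iff[OF assms(1,2)] assms(4) show False by auto
qed

lemma arc_midpoint_neq_pathfinish:
  assumes "arc g"
  shows "g (1/2) \<noteq> pathfinish g"
proof -
  have "inj_on g {0..1}" using assms by (simp add: arc_def)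
  from inj_onD[OF this, of "1/2" 1] show ?thesis by (auto simp: pathfinish_def)
qed

lemma arc_midpoint_in_inside_iff_pathstart:
  fixes g :: "real \<Rightarrow> complex"
  assumes "arc g" "path_image g \<inter> G \<subseteq> {pathfinish g}"
  shows "g (1/2) \<in> inside G \<longleftrightarrow> pathstart g \<in> inside G"
proof -
  have "reversepath g (1/2) = g (1/2)" by (simp add: reversepath_def)
  then show ?thesis
    using arc_point_in_inside_iff[OF arc_reversepath[OF assms(1)], of G "1/2"] assms(2) by simp
qed

lemma compact_inversion_image:
  fixes G :: "complex set"
  assumes "compact G" "q \<notin> G"
  shows "compact ((\<lambda>z. inverse (z - q)) ` G)"
  by (rule compact_continuous_image[OF _ assms(1)]) (use assms(2) in \<open>auto intro!: continuous_intros\<close>)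

lemma inversion_notin_image:
  fixes G :: "complex set"
  assumes "z \<notin> G" "z \<noteq> q" "q \<notin> G"
  shows "inverse (z - q) \<notin> (\<lambda>z. inverse (z - q)) ` G"
  using assms by (auto simp: inverse_eq_iff_eq)

lemma inside_point_inverted_outside:
  fixes G :: "complex set"
  assumes "compact G" "q \<in> inside G"
  obtains z where "z \<in> inside G" "z \<noteq> q" "inverse (z - q) \<in> outside ((\<lambda>z. inverse (z - q)) ` G)"
proof -
  have qG: "q \<notin> G" using assms(2) inside_no_overlap by blast
  obtain R where R: "R > 0" "inside ((\<lambda>z. inverse (z - q)) ` G) \<subseteq> ball 0 R"
    using bounded_inside[OF compact_imp_bounded[OF compact_inversion_image[OF assms(1) qG]]]
      bounded_subset_ballD by blast
  have "open (inside G)" using open_inside compact_imp_closed assms(1) by blast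
  then obtain e where e: "e > 0" "ball q e \<subseteq> inside G"
    using assms(2) open_contains_ball by blast
  define r where "r = min (e/2) (inverse R / 2)"
  have r: "r > 0" "r < e" "r < inverse R" using e R by (auto simp: r_def min_def)
  define z where "z = q + of_real r"
  have z: "z \<in> inside G" "z \<noteq> q" using e r by (auto simp: z_def dist_norm)
  then have "z \<notin> G" using inside_no_overlap by blast
  have "norm (inverse (z - q)) = inverse r" using r by (simp add: z_def norm_inverse)
  moreover have "inverse r > R" using r R
    by (metis inverse_inverse_eq inverse_less_iff_less inverse_positive_iff_positive)
  ultimately have "inverse (z - q) \<notin> inside ((\<lambda>z. inverse (z - q)) ` G)" using R by auto
  with inversion_notin_image[OF \<open>z \<notin> G\<close> z(2) qG]
  have "inverse (z - q) \<in> outside ((\<lambda>z. inverse (z - q)) ` G)"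
    using inside_Un_outside by blast
  with z that show ?thesis by blast
qed

lemma arc_inversion:
  fixes g :: "real \<Rightarrow> complex"
  assumes "arc g" "q \<notin> path_image g"
  shows "arc ((\<lambda>z. inverse (z - q)) \<circ> g)"
proof -
  have "continuous_on (path_image g) (\<lambda>z. inverse (z - q))"
    by (intro continuous_intros) (use assms(2) in auto)
  moreover have "inj_on (\<lambda>z. inverse (z - q)) (path_image g)" by (auto simp: inj_on_def)
  ultimately show ?thesis
    using assms(1) by (auto simp: arc_def path_image_def intro: path_continuous_image comp_inj_on)
qed

text \<open>The outside of the image of G, punctured at 0, is connected; mapped back by the inversion it
  avoids G and joins P to points of the inside of G near q.\<close>
lemma inversion_maps_outside_into_inside:
  fixes G :: "complex set"
  assumes "compact G" "q \<in> inside G" "P \<notin> G" "P \<notin> inside G"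
  shows "inverse (P - q) \<in> inside ((\<lambda>z. inverse (z - q)) ` G)"
proof (rule ccontr)
  define \<phi> where "\<phi> = (\<lambda>z::complex. inverse (z - q))"
  define \<psi> where "\<psi> = (\<lambda>w::complex. q + inverse w)"
  assume "inverse (P - q) \<notin> inside ((\<lambda>z. inverse (z - q)) ` G)"
  have qG: "q \<notin> G" using assms(2) inside_no_overlap by blast
  have Pq: "P \<noteq> q" using assms by blast
  have PO: "\<phi> P \<in> outside (\<phi> ` G)"
    using \<open>inverse (P - q) \<notin> _\<close> inversion_notin_image[OF assms(3) Pq qG] inside_Un_outside
    unfolding \<phi>_def by blast
  obtain z where z: "z \<in> inside G" "z \<noteq> q" "\<phi> z \<in> outside (\<phi> ` G)"
    using inside_point_inverted_outside[OF assms(1,2)] unfolding \<phi>_def by blast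
  define Om where "Om = outside (\<phi> ` G) - {0}"
  have cG': "compact (\<phi> ` G)" unfolding \<phi>_def by (rule compact_inversion_image[OF assms(1) qG])
  have "connected Om" unfolding Om_def
    by (rule connected_open_delete)
       (auto intro: open_outside compact_imp_closed cG' connected_outside[OF compact_imp_bounded[OF cG']])
  then have "connected (\<psi> ` Om)"
    by (rule connected_continuous_image[rotated]) (auto simp: \<psi>_def Om_def intro!: continuous_intros)
  moreover have "\<psi> ` Om \<inter> G = {}"
  proof (rule ccontr)
    assume "\<psi> ` Om \<inter> G \<noteq> {}"
    then obtain w where w: "w \<in> Om" "\<psi> w \<in> G" by blast
    then have "\<phi> (\<psi> w) = w" unfolding Om_def by (simp add: \<phi>_def \<psi>_def)
    with w have "w \<in> \<phi> ` G" by (metis image_eqI)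
    with w show False unfolding Om_def using outside_no_overlap by blast
  qed
  moreover have "\<psi> (\<phi> x) = x" if "x \<noteq> q" for x using that by (simp add: \<phi>_def \<psi>_def)
  then have "z \<in> \<psi> ` Om" "P \<in> \<psi> ` Om"
    using z PO Pq unfolding Om_def by (force simp: \<phi>_def)+
  ultimately have "P \<in> inside G" using connected_subset_inside z(1) by blast
  with assms(4) show False by blast
qed

lemma inside_theta_split:
  fixes c1 c2 c :: "real \<Rightarrow> complex"
  assumes "arc c1" "arc c2" "arc c" "a \<noteq> b"
    and "pathstart c1 = a" "pathfinish c1 = b" "pathstart c2 = a" "pathfinish c2 = b"
    and "pathstart c = a" "pathfinish c = b"
    and "path_image c1 \<inter> path_image c2 = {a, b}" "path_image c1 \<inter> path_image c = {a, b}"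
      "path_image c2 \<inter> path_image c = {a, b}"
    and "x \<in> path_image c" "x \<in> inside (path_image c1 \<union> path_image c2)"
  shows "inside (path_image c1 \<union> path_image c2) =
    inside (path_image c1 \<union> path_image c) \<union> inside (path_image c2 \<union> path_image c) \<union> (path_image c - {a, b})"
proof -
  have "path_image c \<inter> inside (path_image c1 \<union> path_image c2) \<noteq> {}" using assms(14,15) by blast
  then show ?thesis
    by (rule split_inside_simple_closed_curve[OF arc_imp_simple_path[OF assms(1)] assms(5,6)
          arc_imp_simple_path[OF assms(2)] assms(7,8) arc_imp_simple_path[OF assms(3)] assms(9,10,4,11-13)])
      (rule sym, assumption)
qed

locale complete_drawing =
  fixes N :: "'v set" and p :: "'v \<Rightarrow> complex" and \<gamma> :: "'v \<Rightarrow> 'v \<Rightarrow> real \<Rightarrow> complex"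
  assumes inj_vertices: "inj_on p N"
    and arc_edge: "\<lbrakk>i \<in> N; j \<in> N; i \<noteq> j\<rbrakk> \<Longrightarrow> arc (\<gamma> i j)"
    and pathstart_edge: "\<lbrakk>i \<in> N; j \<in> N; i \<noteq> j\<rbrakk> \<Longrightarrow> pathstart (\<gamma> i j) = p i"
    and pathfinish_edge: "\<lbrakk>i \<in> N; j \<in> N; i \<noteq> j\<rbrakk> \<Longrightarrow> pathfinish (\<gamma> i j) = p j"
    and edge_image_sym: "\<lbrakk>i \<in> N; j \<in> N; i \<noteq> j\<rbrakk> \<Longrightarrow> path_image (\<gamma> j i) = path_image (\<gamma> i j)"
    and edge_vertices: "\<lbrakk>i \<in> N; j \<in> N; i \<noteq> j\<rbrakk> \<Longrightarrow> path_image (\<gamma> i j) \<inter> p ` N = {p i, p j}"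
    and edges_meet: "\<lbrakk>i \<in> N; j \<in> N; k \<in> N; l \<in> N; i \<noteq> j; k \<noteq> l; {i, j} \<noteq> {k, l}\<rbrakk>
      \<Longrightarrow> path_image (\<gamma> i j) \<inter> path_image (\<gamma> k l) = p ` ({i, j} \<inter> {k, l})"

lemma complete_drawing_subset:
  assumes "complete_drawing N p \<gamma>" "M \<subseteq> N"
  shows "complete_drawing M p \<gamma>"
proof -
  interpret complete_drawing N p \<gamma> by fact
  show ?thesis
  proof
    show "inj_on p M" using inj_on_subset[OF inj_vertices assms(2)] .
    fix i j k l
    assume ij: "i \<in> M" "j \<in> M" "i \<noteq> j"
    have ij': "i \<in> N" "j \<in> N" using ij assms(2) by auto
    with ij(3) show "arc (\<gamma> i j)" "pathstart (\<gamma> i j) = p i" "pathfinish (\<gamma> i j) = p j"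
      "path_image (\<gamma> j i) = path_image (\<gamma> i j)"
      by (simp_all add: arc_edge pathstart_edge pathfinish_edge edge_image_sym)
    show "path_image (\<gamma> i j) \<inter> p ` M = {p i, p j}"
      using edge_vertices[of i j] ij assms(2) by blast
    assume "k \<in> M" "l \<in> M" "k \<noteq> l" "{i, j} \<noteq> {k, l}"
    then show "path_image (\<gamma> i j) \<inter> path_image (\<gamma> k l) = p ` ({i, j} \<inter> {k, l})"
      using edges_meet ij assms(2) by blast
  qed
qed

context complete_drawing
begin

abbreviation \<Gamma> :: "'v \<Rightarrow> 'v \<Rightarrow> complex set" where
  "\<Gamma> i j \<equiv> path_image (\<gamma> i j)"

lemma vertex_on_edge_iff:
  assumes "i \<in> N" "j \<in> N" "k \<in> N" "i \<noteq> j"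
  shows "p k \<in> \<Gamma> i j \<longleftrightarrow> k = i \<or> k = j"
proof -
  have "p k \<in> p ` N" using assms(3) by blast
  then have "p k \<in> \<Gamma> i j \<longleftrightarrow> p k \<in> {p i, p j}" using edge_vertices[OF assms(1,2,4)] by blast
  then show ?thesis using inj_vertices assms(1-3) by (auto simp: inj_on_eq_iff)
qed

lemma disjoint_edges:
  assumes "i \<in> N" "j \<in> N" "k \<in> N" "l \<in> N" "distinct [i, j, k, l]"
  shows "\<Gamma> i j \<inter> \<Gamma> k l = {}"
  using edges_meet[of i j k l] assms by (auto simp: doubleton_eq_iff)

lemma adjacent_edges:
  assumes "i \<in> N" "j \<in> N" "k \<in> N" "distinct [i, j, k]"
  shows "\<Gamma> i j \<inter> \<Gamma> i k = {p i}"
  using edges_meet[of i j i k] assms by (auto simp: doubleton_eq_iff)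

lemma two_edge_arc:
  assumes "set [i, j, k] \<subseteq> N" "distinct [i, j, k]"
  shows "arc (\<gamma> i j +++ \<gamma> j k)" "pathstart (\<gamma> i j +++ \<gamma> j k) = p i"
    "pathfinish (\<gamma> i j +++ \<gamma> j k) = p k"
    "path_image (\<gamma> i j +++ \<gamma> j k) = \<Gamma> i j \<union> \<Gamma> j k"
proof -
  have "\<Gamma> i j \<inter> \<Gamma> j k = {p j}"
    using edge_image_sym[of i j] adjacent_edges[of j i k] assms by auto
  then show "arc (\<gamma> i j +++ \<gamma> j k)"
    using assms arc_edge pathstart_edge pathfinish_edge by (subst arc_join_eq) auto
  show "pathstart (\<gamma> i j +++ \<gamma> j k) = p i" "pathfinish (\<gamma> i j +++ \<gamma> j k) = p k"
    "path_image (\<gamma> i j +++ \<gamma> j k) = \<Gamma> i j \<union> \<Gamma> j k"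
    using assms pathstart_edge pathfinish_edge by (auto simp: path_image_join)
qed

lemma inversion_drawing:
  assumes "q \<notin> p ` N" and edges_avoid: "\<And>i j. \<lbrakk>i \<in> N; j \<in> N; i \<noteq> j\<rbrakk> \<Longrightarrow> q \<notin> \<Gamma> i j"
  shows "complete_drawing N (\<lambda>i. inverse (p i - q)) (\<lambda>i j. (\<lambda>z. inverse (z - q)) \<circ> \<gamma> i j)"
proof -
  define \<phi> where "\<phi> = (\<lambda>z::complex. inverse (z - q))"
  have inj\<phi>: "inj_on \<phi> (- {q})" by (auto simp: inj_on_def \<phi>_def)
  have edge_sub: "\<Gamma> i j \<subseteq> - {q}" if "i \<in> N" "j \<in> N" "i \<noteq> j" for i j
    using edges_avoid[OF that] by auto
  have vert_sub: "p ` N \<subseteq> - {q}" using assms(1) by auto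
  have image_Int_edges: "\<phi> ` (\<Gamma> i j \<inter> \<Gamma> k l) = \<phi> ` \<Gamma> i j \<inter> \<phi> ` \<Gamma> k l"
    if "i \<in> N" "j \<in> N" "k \<in> N" "l \<in> N" "i \<noteq> j" "k \<noteq> l" for i j k l
    using inj_on_image_Int[OF inj\<phi> edge_sub edge_sub] that by blast
  have image_Int_vertices: "\<phi> ` (\<Gamma> i j \<inter> p ` N) = \<phi> ` \<Gamma> i j \<inter> \<phi> ` p ` N"
    if "i \<in> N" "j \<in> N" "i \<noteq> j" for i j
    using inj_on_image_Int[OF inj\<phi> edge_sub[OF that] vert_sub] .
  have "complete_drawing N (\<lambda>i. \<phi> (p i)) (\<lambda>i j. \<phi> \<circ> \<gamma> i j)"
  proof
    show "inj_on (\<lambda>i. \<phi> (p i)) N"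
      using comp_inj_on[OF inj_vertices inj_on_subset[OF inj\<phi> vert_sub]] by (simp add: o_def)
    fix i j k l
    assume ij: "i \<in> N" "j \<in> N" "i \<noteq> j"
    show "arc (\<phi> \<circ> \<gamma> i j)"
      unfolding \<phi>_def by (rule arc_inversion[OF arc_edge[OF ij] edges_avoid[OF ij]])
    from ij show "pathstart (\<phi> \<circ> \<gamma> i j) = \<phi> (p i)" "pathfinish (\<phi> \<circ> \<gamma> i j) = \<phi> (p j)"
      "path_image (\<phi> \<circ> \<gamma> j i) = path_image (\<phi> \<circ> \<gamma> i j)"
      using pathstart_edge pathfinish_edge edge_image_sym
      by (simp_all add: pathstart_compose pathfinish_compose path_image_compose)
    show "path_image (\<phi> \<circ> \<gamma> i j) \<inter> (\<lambda>i. \<phi> (p i)) ` N = {\<phi> (p i), \<phi> (p j)}"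
      using image_Int_vertices[OF ij] edge_vertices[OF ij]
      by (simp add: path_image_compose image_image)
    assume kl: "k \<in> N" "l \<in> N" "k \<noteq> l" "{i, j} \<noteq> {k, l}"
    show "path_image (\<phi> \<circ> \<gamma> i j) \<inter> path_image (\<phi> \<circ> \<gamma> k l) = (\<lambda>i. \<phi> (p i)) ` ({i, j} \<inter> {k, l})"
    proof -
      have "\<phi> ` \<Gamma> i j \<inter> \<phi> ` \<Gamma> k l = \<phi> ` (p ` ({i, j} \<inter> {k, l}))"
        using image_Int_edges[OF ij(1,2) kl(1,2) ij(3) kl(3)]
          edges_meet[OF ij(1,2) kl(1,2) ij(3) kl(3,4)] by simp
      then show ?thesis by (simp add: path_image_compose image_image)
    qed
  qed
  then show ?thesis by (simp add: \<phi>_def)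
qed

lemma vertex_inside_along_edge:
  assumes "i \<in> N" "j \<in> N" "i \<noteq> j" "\<Gamma> i j \<inter> X = {}" "p i \<in> inside X"
  shows "p j \<in> inside X"
  using pathfinish_inside_if_disjoint[OF arc_imp_path[OF arc_edge] assms(4)] assms
    pathstart_edge pathfinish_edge by auto

lemma vertex_not_inside_subregion:
  assumes "i \<in> N" "j \<in> N" "i \<noteq> j" "\<Gamma> i j \<inter> B = {}" "inside B \<subseteq> inside X" "p j \<in> X"
  shows "p i \<notin> inside B"
  using vertex_inside_along_edge[OF assms(1-4)] assms(5,6) inside_no_overlap by blast

lemma theta_paths_meet:
  assumes "set [s, t, u, v] \<subseteq> N" "distinct [s, t, u, v]"
  shows "\<Gamma> s t \<inter> (\<Gamma> s u \<union> \<Gamma> u t) = {p s, p t}"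
    and "(\<Gamma> s u \<union> \<Gamma> u t) \<inter> (\<Gamma> s v \<union> \<Gamma> v t) = {p s, p t}"
proof -
  have N: "s \<in> N" "t \<in> N" "u \<in> N" "v \<in> N" using assms(1) by auto
  show "\<Gamma> s t \<inter> (\<Gamma> s u \<union> \<Gamma> u t) = {p s, p t}"
    using adjacent_edges[of s t u] adjacent_edges[of t s u] edge_image_sym[of s t] edge_image_sym[of t u]
      vertex_on_edge_iff N assms(2) by auto
  show "(\<Gamma> s u \<union> \<Gamma> u t) \<inter> (\<Gamma> s v \<union> \<Gamma> v t) = {p s, p t}"
    using adjacent_edges[of s u v] adjacent_edges[of t u v] disjoint_edges[of s u v t]
      disjoint_edges[of u t s v] edge_image_sym[of t u] edge_image_sym[of t v]
      vertex_on_edge_iff N assms(2) by auto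
qed

lemma split_triangle_inside:
  assumes "set [a, b, c, d] \<subseteq> N" "distinct [a, b, c, d]"
    and "p d \<in> inside (\<Gamma> a b \<union> \<Gamma> b c \<union> \<Gamma> c a)"
  shows "inside (\<Gamma> a b \<union> \<Gamma> b c \<union> \<Gamma> c a) =
    inside (\<Gamma> a b \<union> \<Gamma> a d \<union> \<Gamma> d b) \<union> inside (\<Gamma> a c \<union> \<Gamma> c b \<union> \<Gamma> a d \<union> \<Gamma> d b)
    \<union> (\<Gamma> a d \<union> \<Gamma> d b - {p a, p b})"
proof -
  have N: "a \<in> N" "b \<in> N" "c \<in> N" "d \<in> N" using assms(1) by auto
  have acb: "set [a, c, b] \<subseteq> N" "distinct [a, c, b]" and adb: "set [a, d, b] \<subseteq> N" "distinct [a, d, b]"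
    and abcd: "set [a, b, c, d] \<subseteq> N" "distinct [a, b, c, d]" and abdc: "set [a, b, d, c] \<subseteq> N" "distinct [a, b, d, c]"
    using N assms(2) by auto
  note via_c = two_edge_arc[OF acb] and via_d = two_edge_arc[OF adb]
  have "\<Gamma> a b \<union> (\<Gamma> a c \<union> \<Gamma> c b) = \<Gamma> a b \<union> \<Gamma> b c \<union> \<Gamma> c a"
    using edge_image_sym[of a c] edge_image_sym[of b c] N assms(2) by auto
  moreover have "p d \<in> \<Gamma> a d \<union> \<Gamma> d b" using vertex_on_edge_iff N assms(2) by auto
  ultimately have "inside (\<Gamma> a b \<union> (\<Gamma> a c \<union> \<Gamma> c b)) = inside (\<Gamma> a b \<union> (\<Gamma> a d \<union> \<Gamma> d b))
      \<union> inside ((\<Gamma> a c \<union> \<Gamma> c b) \<union> (\<Gamma> a d \<union> \<Gamma> d b)) \<union> (\<Gamma> a d \<union> \<Gamma> d b - {p a, p b})"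
    using inside_theta_split[of "\<gamma> a b" "\<gamma> a c +++ \<gamma> c b" "\<gamma> a d +++ \<gamma> d b" "p a" "p b" "p d"]
      arc_edge[of a b] pathstart_edge[of a b] pathfinish_edge[of a b] inj_vertices N assms(2,3) via_c via_d
      theta_paths_meet[OF abcd] theta_paths_meet(1)[OF abdc]
    by (simp add: inj_on_eq_iff)
  then show ?thesis using \<open>\<Gamma> a b \<union> (\<Gamma> a c \<union> \<Gamma> c b) = _\<close> by (simp add: Un_assoc)
qed

lemma split_quadrilateral_inside:
  assumes "set [a, b, c, d] \<subseteq> N" "distinct [a, b, c, d]"
    and "x \<in> \<Gamma> c d" "x \<in> inside (\<Gamma> a c \<union> \<Gamma> c b \<union> \<Gamma> a d \<union> \<Gamma> d b)"
  shows "inside (\<Gamma> a c \<union> \<Gamma> c b \<union> \<Gamma> a d \<union> \<Gamma> d b) =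
    inside (\<Gamma> c a \<union> \<Gamma> a d \<union> \<Gamma> c d) \<union> inside (\<Gamma> c b \<union> \<Gamma> b d \<union> \<Gamma> c d) \<union> (\<Gamma> c d - {p c, p d})"
proof -
  have N: "a \<in> N" "b \<in> N" "c \<in> N" "d \<in> N" using assms(1) by auto
  have cad: "set [c, a, d] \<subseteq> N" "distinct [c, a, d]" and cbd: "set [c, b, d] \<subseteq> N" "distinct [c, b, d]"
    and cdab: "set [c, d, a, b] \<subseteq> N" "distinct [c, d, a, b]" and cdba: "set [c, d, b, a] \<subseteq> N" "distinct [c, d, b, a]"
    using N assms(2) by auto
  note via_a = two_edge_arc[OF cad] and via_b = two_edge_arc[OF cbd]
  have Q: "(\<Gamma> c a \<union> \<Gamma> a d) \<union> (\<Gamma> c b \<union> \<Gamma> b d) = \<Gamma> a c \<union> \<Gamma> c b \<union> \<Gamma> a d \<union> \<Gamma> d b"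
    using edge_image_sym[of a c] edge_image_sym[of b d] N assms(2) by auto
  have "inside ((\<Gamma> c a \<union> \<Gamma> a d) \<union> (\<Gamma> c b \<union> \<Gamma> b d)) = inside ((\<Gamma> c a \<union> \<Gamma> a d) \<union> \<Gamma> c d)
      \<union> inside ((\<Gamma> c b \<union> \<Gamma> b d) \<union> \<Gamma> c d) \<union> (\<Gamma> c d - {p c, p d})"
    using inside_theta_split[of "\<gamma> c a +++ \<gamma> a d" "\<gamma> c b +++ \<gamma> b d" "\<gamma> c d" "p c" "p d" x]
      arc_edge[of c d] pathstart_edge[of c d] pathfinish_edge[of c d] inj_vertices N assms(2,3,4) via_a via_b
      theta_paths_meet(2)[OF cdab] theta_paths_meet(1)[OF cdab] theta_paths_meet(1)[OF cdba] Q
    by (simp add: inj_on_eq_iff Int_commute)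
  then show ?thesis using Q by (simp add: Un_assoc)
qed

lemma edge_midpoint_inside_quadrilateral:
  assumes "set [a, b, c, d] \<subseteq> N" "distinct [a, b, c, d]"
    and "p d \<in> inside (\<Gamma> a b \<union> \<Gamma> b c \<union> \<Gamma> c a)"
  shows "\<gamma> c d (1/2) \<in> inside (\<Gamma> a c \<union> \<Gamma> c b \<union> \<Gamma> a d \<union> \<Gamma> d b)"
proof -
  have N: "a \<in> N" "b \<in> N" "c \<in> N" "d \<in> N" using assms(1) by auto
  have ne: "distinct [a, b, c, d]" by fact
  let ?T = "\<Gamma> a b \<union> \<Gamma> b c \<union> \<Gamma> c a"
  let ?I = "inside (\<Gamma> a b \<union> \<Gamma> a d \<union> \<Gamma> d b)"
  note split = split_triangle_inside[OF assms]
  have arc_cd: "arc (\<gamma> c d)" and ends: "pathstart (\<gamma> c d) = p c" "pathfinish (\<gamma> c d) = p d"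
    using arc_edge[of c d] pathstart_edge[of c d] pathfinish_edge[of c d] N ne by auto
  have "\<Gamma> c d \<inter> ?T \<subseteq> {pathstart (\<gamma> c d)}"
    using disjoint_edges[of c d a b] adjacent_edges[of c d b] adjacent_edges[of c d a]
      edge_image_sym[of b c] N ne ends by auto
  from arc_point_in_inside_iff[OF arc_cd this, of "1/2"]
  have "\<gamma> c d (1/2) \<in> inside ?T" using assms(3) ends by simp
  moreover have "\<gamma> c d (1/2) \<notin> \<Gamma> a d \<union> \<Gamma> d b"
  proof -
    have "\<Gamma> c d \<inter> (\<Gamma> a d \<union> \<Gamma> d b) \<subseteq> {p d}"
      using adjacent_edges[of d c a] adjacent_edges[of d c b] edge_image_sym[of a d] edge_image_sym[of c d]
        N ne by auto
    moreover have "\<gamma> c d (1/2) \<in> \<Gamma> c d" by (simp add: path_image_def)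
    moreover have "\<gamma> c d (1/2) \<noteq> p d" using arc_midpoint_neq_pathfinish[OF arc_cd] ends by simp
    ultimately show ?thesis by (metis IntI singletonD subsetD)
  qed
  moreover have "\<gamma> c d (1/2) \<notin> ?I"
  proof
    assume mid_in: "\<gamma> c d (1/2) \<in> ?I"
    have "\<Gamma> c d \<inter> (\<Gamma> a b \<union> \<Gamma> a d \<union> \<Gamma> d b) \<subseteq> {pathfinish (\<gamma> c d)}"
      using disjoint_edges[of c d a b] adjacent_edges[of d c a] adjacent_edges[of d c b]
        edge_image_sym[of a d] edge_image_sym[of c d] N ne ends by auto
    from arc_midpoint_in_inside_iff_pathstart[OF arc_cd this] mid_in have "p c \<in> ?I"
      using ends by simp
    moreover have "p c \<in> ?T" using vertex_on_edge_iff N ne by auto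
    ultimately show False using split inside_no_overlap by blast
  qed
  ultimately show ?thesis using split by blast
qed

text \<open>If p d were inside, so would be p e. Splitting the interior by the path a d b, and the half
  containing p e by the edge c d, leaves p e in a region whose boundary misses the edge from e to b
  or to a; that edge would carry a vertex of the triangle into its interior.\<close>
lemma vertex_not_inside_triangle:
  assumes "set [a, b, c, d, e] \<subseteq> N" "distinct [a, b, c, d, e]"
  shows "p d \<notin> inside (\<Gamma> a b \<union> \<Gamma> b c \<union> \<Gamma> c a)"
proof
  let ?T = "\<Gamma> a b \<union> \<Gamma> b c \<union> \<Gamma> c a"
  let ?Q = "\<Gamma> a c \<union> \<Gamma> c b \<union> \<Gamma> a d \<union> \<Gamma> d b"
  have N: "a \<in> N" "b \<in> N" "c \<in> N" "d \<in> N" "e \<in> N" using assms(1) by auto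
  have ne: "distinct [a, b, c, d, e]" by fact
  have abcd: "set [a, b, c, d] \<subseteq> N" "distinct [a, b, c, d]" using N ne by auto
  have on_T: "p a \<in> ?T" "p b \<in> ?T" "p c \<in> ?T" using vertex_on_edge_iff N ne by auto
  assume d_in: "p d \<in> inside ?T"
  note split_T = split_triangle_inside[OF abcd d_in]
  have "p e \<in> inside ?T"
    using vertex_inside_along_edge[OF N(4,5), of ?T] d_in disjoint_edges[of d e a b]
      disjoint_edges[of d e b c] disjoint_edges[of d e c a] N ne by auto
  moreover have "p e \<notin> inside (\<Gamma> a b \<union> \<Gamma> a d \<union> \<Gamma> d b)"
  proof (rule vertex_not_inside_subregion[of e c _ ?T])
    show "\<Gamma> e c \<inter> (\<Gamma> a b \<union> \<Gamma> a d \<union> \<Gamma> d b) = {}"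
      using disjoint_edges[of e c a b] disjoint_edges[of e c a d] disjoint_edges[of e c d b] N ne by auto
    show "inside (\<Gamma> a b \<union> \<Gamma> a d \<union> \<Gamma> d b) \<subseteq> inside ?T" using split_T by blast
  qed (use on_T N ne in auto)
  moreover have "p e \<notin> \<Gamma> a d \<union> \<Gamma> d b" using vertex_on_edge_iff N ne by auto
  ultimately have e_in: "p e \<in> inside ?Q" using split_T by blast
  have "\<gamma> c d (1/2) \<in> \<Gamma> c d" by (simp add: path_image_def)
  note split_Q = split_quadrilateral_inside[OF abcd this edge_midpoint_inside_quadrilateral[OF abcd d_in]]
  have "inside ?Q \<subseteq> inside ?T" using split_T by blast
  have "p e \<notin> inside (\<Gamma> c a \<union> \<Gamma> a d \<union> \<Gamma> c d)"
  proof (rule vertex_not_inside_subregion[of e b _ ?T])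
    show "\<Gamma> e b \<inter> (\<Gamma> c a \<union> \<Gamma> a d \<union> \<Gamma> c d) = {}"
      using disjoint_edges[of e b c a] disjoint_edges[of e b a d] disjoint_edges[of e b c d] N ne by auto
    show "inside (\<Gamma> c a \<union> \<Gamma> a d \<union> \<Gamma> c d) \<subseteq> inside ?T"
      using split_Q \<open>inside ?Q \<subseteq> inside ?T\<close> by blast
  qed (use on_T N ne in auto)
  moreover have "p e \<notin> inside (\<Gamma> c b \<union> \<Gamma> b d \<union> \<Gamma> c d)"
  proof (rule vertex_not_inside_subregion[of e a _ ?T])
    show "\<Gamma> e a \<inter> (\<Gamma> c b \<union> \<Gamma> b d \<union> \<Gamma> c d) = {}"
      using disjoint_edges[of e a c b] disjoint_edges[of e a b d] disjoint_edges[of e a c d] N ne by auto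
    show "inside (\<Gamma> c b \<union> \<Gamma> b d \<union> \<Gamma> c d) \<subseteq> inside ?T"
      using split_Q \<open>inside ?Q \<subseteq> inside ?T\<close> by blast
  qed (use on_T N ne in auto)
  moreover have "p e \<notin> \<Gamma> c d" using vertex_on_edge_iff N ne by auto
  ultimately show False using e_in split_Q by blast
qed

lemma compact_triangle:
  assumes "set [a, b, c] \<subseteq> N" "distinct [a, b, c]"
  shows "compact (\<Gamma> a b \<union> \<Gamma> b c \<union> \<Gamma> c a)"
  using assms arc_edge by (auto intro!: compact_Un compact_path_image arc_imp_path)

lemma inside_triangle_nonempty:
  assumes "set [a, b, c] \<subseteq> N" "distinct [a, b, c]"
  shows "inside (\<Gamma> a b \<union> \<Gamma> b c \<union> \<Gamma> c a) \<noteq> {}"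
proof -
  have N: "a \<in> N" "b \<in> N" "c \<in> N" using assms(1) by auto
  have "set [b, c, a] \<subseteq> N" "distinct [b, c, a]" using assms by auto
  note bca = two_edge_arc[OF this]
  have "\<Gamma> a b \<inter> (\<Gamma> b c \<union> \<Gamma> c a) \<subseteq> {p a, p b}"
    using adjacent_edges[of b a c] adjacent_edges[of a b c] edge_image_sym[of a b] edge_image_sym[of a c]
      N assms(2) by auto
  then have "simple_path (\<gamma> a b +++ (\<gamma> b c +++ \<gamma> c a))"
    using bca arc_edge[of a b] pathstart_edge[of a b] pathfinish_edge[of a b] N assms(2)
    by (subst simple_path_join_loop_eq) auto
  moreover have "path_image (\<gamma> a b +++ (\<gamma> b c +++ \<gamma> c a)) = \<Gamma> a b \<union> \<Gamma> b c \<union> \<Gamma> c a"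
    using bca pathstart_edge[of a b] pathfinish_edge[of a b] N assms(2) by (simp add: path_image_join Un_assoc)
  moreover have "pathfinish (\<gamma> a b +++ (\<gamma> b c +++ \<gamma> c a)) = pathstart (\<gamma> a b +++ (\<gamma> b c +++ \<gamma> c a))"
    using bca pathstart_edge[of a b] N assms(2) by simp
  ultimately show ?thesis using Jordan_inside_outside by metis
qed

lemma edge_disjoint_inside_triangle:
  assumes "set [a, b, c] \<subseteq> N" "distinct [a, b, c]" "i \<in> N" "j \<in> N" "i \<noteq> j"
    and "p i \<notin> inside (\<Gamma> a b \<union> \<Gamma> b c \<union> \<Gamma> c a)" "p j \<notin> inside (\<Gamma> a b \<union> \<Gamma> b c \<union> \<Gamma> c a)"
  shows "\<Gamma> i j \<inter> inside (\<Gamma> a b \<union> \<Gamma> b c \<union> \<Gamma> c a) = {}"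
proof -
  let ?T = "\<Gamma> a b \<union> \<Gamma> b c \<union> \<Gamma> c a"
  have N: "a \<in> N" "b \<in> N" "c \<in> N" using assms(1) by auto
  have on_triangle: "\<Gamma> i j \<subseteq> ?T" if "i \<in> {a, b, c}" "j \<in> {a, b, c}" "i \<noteq> j" for i j
    using that edge_image_sym[of a b] edge_image_sym[of b c] edge_image_sym[of c a] N assms(2) by auto
  have off_triangle: "\<Gamma> i j \<inter> inside ?T = {}"
    if ij: "i \<in> N" "j \<in> N" "i \<noteq> j" "j \<notin> {a, b, c}" "p i \<notin> inside ?T" "p j \<notin> inside ?T" for i j
  proof (rule arc_disjoint_inside)
    have "\<Gamma> i j \<inter> \<Gamma> k l \<subseteq> {p i}" if "k \<in> {a, b, c}" "l \<in> {a, b, c}" "k \<noteq> l" for k l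
      using edges_meet[of i j k l] that ij N by auto
    then show "\<Gamma> i j \<inter> ?T \<subseteq> {pathstart (\<gamma> i j)}"
      using pathstart_edge[OF ij(1-3)] assms(2) by auto
  qed (use ij arc_edge pathstart_edge pathfinish_edge in auto)
  show ?thesis
  proof (cases "j \<in> {a, b, c}")
    case True
    show ?thesis
    proof (cases "i \<in> {a, b, c}")
      case True
      then show ?thesis using on_triangle[OF True \<open>j \<in> {a, b, c}\<close> assms(5)] inside_no_overlap by blast
    next
      case False
      then show ?thesis using off_triangle[of j i] edge_image_sym[of i j] assms by auto
    qed
  next
    case False
    then show ?thesis using off_triangle[of i j] assms by auto
  qed
qed

text \<open>Inverting about a point q inside the triangle abc: q lies on no edge, because d and e are not
  inside the triangle, and the image of d lies inside the image of the triangle.\<close>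
lemma no_five_vertices:
  assumes "set [a, b, c, d, e] \<subseteq> N" "distinct [a, b, c, d, e]"
  shows False
proof -
  let ?M = "{a, b, c, d, e}"
  let ?T = "\<Gamma> a b \<union> \<Gamma> b c \<union> \<Gamma> c a"
  interpret M: complete_drawing ?M p \<gamma>
    using complete_drawing_subset[OF complete_drawing_axioms] assms(1) by simp
  have abc: "set [a, b, c] \<subseteq> ?M" "distinct [a, b, c]" using assms(2) by auto
  obtain q where q: "q \<in> inside ?T" using M.inside_triangle_nonempty[OF abc] by blast
  have d_out: "p d \<notin> inside ?T" and e_out: "p e \<notin> inside ?T"
    using M.vertex_not_inside_triangle[of a b c d e] M.vertex_not_inside_triangle[of a b c e d] assms(2)
    by auto
  have on_T: "p a \<in> ?T" "p b \<in> ?T" "p c \<in> ?T" "p d \<notin> ?T"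
    using M.vertex_on_edge_iff assms(2) by auto
  have outside_T: "p i \<notin> inside ?T" if "i \<in> ?M" for i
    using that on_T d_out e_out inside_no_overlap by blast
  have "q \<notin> p ` ?M" using outside_T q by blast
  moreover have "q \<notin> \<Gamma> i j" if "i \<in> ?M" "j \<in> ?M" "i \<noteq> j" for i j
    using M.edge_disjoint_inside_triangle[OF abc that outside_T outside_T] that q by blast
  ultimately interpret I: complete_drawing ?M "\<lambda>i. inverse (p i - q)" "\<lambda>i j. (\<lambda>z. inverse (z - q)) \<circ> \<gamma> i j"
    by (rule M.inversion_drawing)
  have "inverse (p d - q) \<in> inside ((\<lambda>z. inverse (z - q)) ` ?T)"
    using inversion_maps_outside_into_inside[OF M.compact_triangle[OF abc] q on_T(4) d_out] .
  then show False
    using I.vertex_not_inside_triangle[of a b c d e] assms(2) by (simp add: path_image_compose image_Un)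
qed

end

lemma planar_clique_drawing:
  assumes "planar V E" "S \<subseteq> V" and clique: "\<And>u v. \<lbrakk>u \<in> S; v \<in> S; u \<noteq> v\<rbrakk> \<Longrightarrow> {u, v} \<in> E"
  obtains f \<gamma> where "complete_drawing S f \<gamma>"
proof -
  from assms(1) obtain f :: "'a \<Rightarrow> complex" and g :: "'a set \<Rightarrow> real \<Rightarrow> complex" where
    inj: "inj_on f V"
    and g: "\<forall>e\<in>E. arc (g e) \<and> {pathstart (g e), pathfinish (g e)} = f ` e
              \<and> path_image (g e) \<inter> f ` V = f ` e"
    and meet: "\<forall>e\<in>E. \<forall>e'\<in>E. e \<noteq> e' \<longrightarrow> path_image (g e) \<inter> path_image (g e') = f ` (e \<inter> e')"
    unfolding planar_def by (elim exE conjE)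
  define \<gamma> where "\<gamma> u v = (if pathstart (g {u, v}) = f u then g {u, v} else reversepath (g {u, v}))" for u v
  have image_\<gamma>: "path_image (\<gamma> u v) = path_image (g {u, v})" for u v
    by (simp add: \<gamma>_def)
  have "complete_drawing S f \<gamma>"
  proof
    show inj_S: "inj_on f S" using inj_on_subset[OF inj assms(2)] .
    fix u v k l
    assume uv: "u \<in> S" "v \<in> S" "u \<noteq> v"
    have "f u \<noteq> f v" using inj_S uv by (simp add: inj_on_eq_iff)
    have "arc (g {u, v})" and ends: "{pathstart (g {u, v}), pathfinish (g {u, v})} = {f u, f v}"
      and on_V: "path_image (g {u, v}) \<inter> f ` V = {f u, f v}"
      using g clique[OF uv] by auto
    then show "arc (\<gamma> u v)" by (simp add: \<gamma>_def arc_reversepath)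
    have "pathstart (g {u, v}) = f u \<and> pathfinish (g {u, v}) = f v
        \<or> pathstart (g {u, v}) = f v \<and> pathfinish (g {u, v}) = f u"
      using ends by (simp add: doubleton_eq_iff)
    then show "pathstart (\<gamma> u v) = f u" "pathfinish (\<gamma> u v) = f v"
      using \<open>f u \<noteq> f v\<close> by (auto simp: \<gamma>_def)
    show "path_image (\<gamma> v u) = path_image (\<gamma> u v)" by (simp add: image_\<gamma> insert_commute)
    have "path_image (g {u, v}) \<inter> f ` S = path_image (g {u, v}) \<inter> f ` V \<inter> f ` S"
      using image_mono[OF assms(2), of f] by (simp add: Int_assoc Int_absorb1)
    moreover have "{f u, f v} \<subseteq> f ` S" using uv by auto
    ultimately show "path_image (\<gamma> u v) \<inter> f ` S = {f u, f v}"
      using on_V unfolding image_\<gamma> by (simp add: Int_absorb2)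
    assume kl: "k \<in> S" "l \<in> S" "k \<noteq> l" "{u, v} \<noteq> {k, l}"
    show "path_image (\<gamma> u v) \<inter> path_image (\<gamma> k l) = f ` ({u, v} \<inter> {k, l})"
      unfolding image_\<gamma> by (rule meet[rule_format, OF clique[OF uv] clique[OF kl(1-3)] kl(4)])
  qed
  then show ?thesis by (rule that)
qed

lemma planar_no_K5:
  assumes "planar V E" "set [a, b, c, d, e] \<subseteq> V" "distinct [a, b, c, d, e]"
    and "\<And>u v. \<lbrakk>u \<in> set [a, b, c, d, e]; v \<in> set [a, b, c, d, e]; u \<noteq> v\<rbrakk> \<Longrightarrow> {u, v} \<in> E"
  shows False
proof -
  obtain f \<gamma> where "complete_drawing (set [a, b, c, d, e]) f \<gamma>"
    using planar_clique_drawing[OF assms(1,2,4)] by blast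
  then show False using assms(3) by (rule complete_drawing.no_five_vertices[OF _ subset_refl])
qed

lemma cycle_edges_conv:
  "cycle_edges vs = (\<lambda>i. {vs ! i, vs ! (Suc i mod length vs)}) ` {..<length vs}"
  unfolding cycle_edges_def by auto

lemma cycle_edges_rotate1: "cycle_edges (rotate1 vs) = cycle_edges vs"
proof (cases "vs = []")
  case False
  define n where "n = length vs"
  have n: "n > 0" using False by (simp add: n_def)
  define edge where "edge j = {vs ! j, vs ! (Suc j mod n)}" for j
  have shift: "(\<lambda>i. Suc i mod n) ` {..<n} = {..<n}"
  proof
    show "(\<lambda>i. Suc i mod n) ` {..<n} \<subseteq> {..<n}" using n by auto
    show "{..<n} \<subseteq> (\<lambda>i. Suc i mod n) ` {..<n}"
    proof
      fix j assume "j \<in> {..<n}"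
      then have "j = Suc (if j = 0 then n - 1 else j - 1) mod n" "(if j = 0 then n - 1 else j - 1) < n"
        using n by auto
      then show "j \<in> (\<lambda>i. Suc i mod n) ` {..<n}" by blast
    qed
  qed
  have "cycle_edges (rotate1 vs) = (\<lambda>i. edge (Suc i mod n)) ` {..<n}"
    unfolding cycle_edges_conv edge_def n_def
    using False by (intro image_cong) (simp_all add: nth_rotate1 mod_Suc_eq)
  also have "\<dots> = edge ` {..<n}" using shift by (metis image_image)
  also have "\<dots> = cycle_edges vs" unfolding cycle_edges_conv edge_def n_def ..
  finally show ?thesis .
qed simp

lemma cycle_edges_rotate: "cycle_edges (rotate k vs) = cycle_edges vs"
  by (induction k) (simp_all add: cycle_edges_rotate1)

lemma simple_cycle_rotate: "simple_cycle V E (rotate k vs) \<longleftrightarrow> simple_cycle V E vs"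
  by (simp add: simple_cycle_def cycle_edges_rotate)

lemma cycle_edge_rotate_to_front:
  assumes "e \<in> cycle_edges vs" "length vs \<ge> 2"
  obtains k where "e = {rotate k vs ! 0, rotate k vs ! 1}"
proof -
  obtain i where i: "i < length vs" "e = {vs ! i, vs ! (Suc i mod length vs)}"
    using assms(1) unfolding cycle_edges_conv by blast
  have len: "0 < length vs" "1 < length vs" using assms(2) by auto
  have "rotate i vs ! 0 = vs ! i" "rotate i vs ! 1 = vs ! (Suc i mod length vs)"
    using i(1) nth_rotate[OF len(1), of i] nth_rotate[OF len(2), of i] by simp_all
  with i(2) show ?thesis by (intro that[of i]) simp
qed

lemma cycle_edges_3: "cycle_edges [a, b, c] = {{a, b}, {b, c}, {c, a}}"
  and cycle_edges_4: "cycle_edges [a, b, c, d] = {{a, b}, {b, c}, {c, d}, {d, a}}"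
  and cycle_edges_5: "cycle_edges [a, b, c, d, e] = {{a, b}, {b, c}, {c, d}, {d, e}, {e, a}}"
  and cycle_edges_6: "cycle_edges [a, b, c, d, e, f] = {{a, b}, {b, c}, {c, d}, {d, e}, {e, f}, {f, a}}"
  by (simp_all add: cycle_edges_conv lessThan_atLeast0 set_upt[symmetric] upt_rec)

lemma cycle_rotate_clique_edge_to_front:
  assumes "simple_cycle V E vs" "e \<in> cycle_edges vs" "e \<in> clique_edges K"
  obtains ws where "simple_cycle V E ws" "length ws = length vs" "set ws = set vs"
    "ws ! 0 \<in> K" "ws ! 1 \<in> K"
proof -
  have "length vs \<ge> 2" using assms(1) by (simp add: simple_cycle_def)
  then obtain k where "e = {rotate k vs ! 0, rotate k vs ! 1}"
    using cycle_edge_rotate_to_front[OF assms(2)] by blast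
  moreover have "e \<subseteq> K" using assms(3) by (auto simp: clique_edges_def)
  ultimately show ?thesis
    using that[of "rotate k vs"] assms(1) by (simp add: simple_cycle_rotate)
qed

lemma nonremovable_even_cycle_complete:
  assumes "simple_cycle V E vs" "\<not> removable V E vs" "even (length vs)"
    and "u \<in> set vs" "v \<in> set vs" "u \<noteq> v"
  shows "{u, v} \<in> E"
proof -
  have "\<not> is_odd_cycle_graph (set vs) (induced_edges E (set vs))"
  proof
    assume "is_odd_cycle_graph (set vs) (induced_edges E (set vs))"
    then obtain ws where "distinct ws" "odd (length ws)" "set ws = set vs"
      unfolding is_odd_cycle_graph_def by blast
    moreover have "distinct vs" using assms(1) by (simp add: simple_cycle_def)
    ultimately show False using assms(3) by (metis distinct_card)
  qed
  then have "is_complete_graph (set vs) (induced_edges E (set vs))"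
    using assms(1,2) unfolding removable_def by blast
  then show ?thesis using assms(4-6) unfolding is_complete_graph_def induced_edges_def by blast
qed

context
  fixes V :: "'a set" and E :: "'a set set" and K :: "'a set"
  assumes planar: "planar V E"
    and no_short_removable: "\<forall>vs. simple_cycle V E vs \<and> length vs \<le> 10 \<longrightarrow> \<not> removable V E vs"
    and four_clique: "four_clique V E K"
begin

lemma clique_vertices: "K \<subseteq> V"
  and clique_adjacent: "\<lbrakk>u \<in> K; v \<in> K; u \<noteq> v\<rbrakk> \<Longrightarrow> {u, v} \<in> E"
  using four_clique unfolding four_clique_def by blast+

lemma clique_remaining_pair:
  assumes "a \<in> K" "b \<in> K" "a \<noteq> b"
  obtains c d where "K - {a, b} = {c, d}" "c \<noteq> d"
proof -
  have "card K = 4" using four_clique by (simp add: four_clique_def)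
  then have "card (K - {a, b}) = 2" using assms by (simp add: card_Diff_subset card_ge_0_finite)
  then show ?thesis using that card_2_iff by metis
qed

lemma short_even_cycle_complete:
  assumes "simple_cycle V E vs" "even (length vs)" "length vs \<le> 10" "u \<in> set vs" "v \<in> set vs" "u \<noteq> v"
  shows "{u, v} \<in> E"
  using nonremovable_even_cycle_complete[OF assms(1) _ assms(2,4-6)] no_short_removable assms(1,3)
  by blast

lemma no_outside_common_neighbour:
  assumes ab: "a \<in> K" "b \<in> K" "a \<noteq> b" and w: "w \<in> V" "w \<notin> K"
    and edges: "{a, w} \<in> E" "{w, b} \<in> E"
  shows False
proof -
  obtain c d where cd: "K - {a, b} = {c, d}" "c \<noteq> d" using clique_remaining_pair[OF ab] by blast
  have "c \<in> K - {a, b}" "d \<in> K - {a, b}" using cd(1) by simp_all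
  then have K: "c \<in> K" "d \<in> K" "c \<notin> {a, b}" "d \<notin> {a, b}" "w \<notin> {a, b, c, d}"
    using w ab by auto
  have w_adj: "{w, z} \<in> E" if z: "z \<in> K" for z
  proof (cases "z \<in> {a, b}")
    case True
    then show ?thesis using edges insert_commute[of w a "{}"] by auto
  next
    case False
    have "simple_cycle V E [a, w, b, z]"
      unfolding simple_cycle_def cycle_edges_4
      using ab w z False edges clique_vertices clique_adjacent[of b z] clique_adjacent[of z a] by auto
    then show ?thesis using short_even_cycle_complete[of "[a, w, b, z]" w z] z w by auto
  qed
  show False
  proof (rule planar_no_K5[OF planar, of a b c d w])
    show "set [a, b, c, d, w] \<subseteq> V" "distinct [a, b, c, d, w]" using ab K cd(2) w clique_vertices by auto
    fix u v assume "u \<in> set [a, b, c, d, w]" "v \<in> set [a, b, c, d, w]" "u \<noteq> v"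
    then consider "u \<in> K" "v \<in> K" | "u = w" "v \<in> K" | "v = w" "u \<in> K" using ab K by auto
    then show "{u, v} \<in> E"
    proof cases
      case 1
      then show ?thesis using clique_adjacent \<open>u \<noteq> v\<close> by blast
    next
      case 2
      then show ?thesis using w_adj[of v] by simp
    next
      case 3
      then show ?thesis using w_adj[of u] insert_commute[of u w "{}"] by simp
    qed
  qed
qed

text \<open>Otherwise the 6-cycle v0 z v1 v2 v3 v4 is complete and contains a K5.\<close>
lemma clique_vertex_on_5_cycle:
  assumes "simple_cycle V E [v0, v1, v2, v3, v4]" "v0 \<in> K" "v1 \<in> K" "z \<in> K" "z \<notin> {v0, v1}"
  shows "z \<in> {v2, v3, v4}"
proof (rule ccontr)
  assume z: "z \<notin> {v2, v3, v4}"
  have V: "set [v0, v1, v2, v3, v4] \<subseteq> V" "distinct [v0, v1, v2, v3, v4]"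
    using assms(1) by (simp_all add: simple_cycle_def)
  have "simple_cycle V E [v0, z, v1, v2, v3, v4]"
    using assms z clique_vertices clique_adjacent[of v0 z] clique_adjacent[of z v1]
    by (auto simp: simple_cycle_def cycle_edges_5 cycle_edges_6)
  then have complete: "{u, v} \<in> E"
    if "u \<in> set [v0, z, v1, v2, v3, v4]" "v \<in> set [v0, z, v1, v2, v3, v4]" "u \<noteq> v" for u v
    using short_even_cycle_complete[OF _ _ _ that] by simp
  show False
  proof (rule planar_no_K5[OF planar, of v0 z v1 v2 v3])
    show "set [v0, z, v1, v2, v3] \<subseteq> V" "distinct [v0, z, v1, v2, v3]"
      using V z assms(4,5) clique_vertices by auto
    have "set [v0, z, v1, v2, v3] \<subseteq> set [v0, z, v1, v2, v3, v4]" by auto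
    moreover fix u v assume "u \<in> set [v0, z, v1, v2, v3]" "v \<in> set [v0, z, v1, v2, v3]" "u \<noteq> v"
    ultimately show "{u, v} \<in> E" using complete by blast
  qed
qed

text \<open>The two remaining clique vertices lie on the path v2 v3 v4, so a vertex of that path
  outside K is a common neighbour of two clique vertices.\<close>
lemma no_5_cycle_through_clique_edge:
  assumes "simple_cycle V E [v0, v1, v2, v3, v4]" "v0 \<in> K" "v1 \<in> K"
  shows False
proof -
  have dist: "distinct [v0, v1, v2, v3, v4]" and V: "set [v0, v1, v2, v3, v4] \<subseteq> V"
    and edges: "{v1, v2} \<in> E" "{v2, v3} \<in> E" "{v3, v4} \<in> E" "{v4, v0} \<in> E"
    using assms(1) by (simp_all add: simple_cycle_def cycle_edges_5)
  obtain c d where cd: "K - {v0, v1} = {c, d}" "c \<noteq> d"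
    using clique_remaining_pair[OF assms(2,3)] dist by auto
  have cd_path: "{c, d} \<subseteq> {v2, v3, v4}" using clique_vertex_on_5_cycle[OF assms] cd(1) by blast
  have in_K: "x \<in> K \<longleftrightarrow> x \<in> {c, d}" if "x \<in> {v2, v3, v4}" for x
    using that dist cd(1) by auto
  show False
  proof (cases "v2 \<in> K")
    case False
    then have "v3 \<in> K" using in_K cd_path cd(2) by auto
    then show False using no_outside_common_neighbour[of v1 v3 v2] False assms(3) V edges dist by auto
  next
    case v2: True
    show False
    proof (cases "v3 \<in> K")
      case False
      then have "v4 \<in> K" using in_K cd_path cd(2) v2 by auto
      then show False using no_outside_common_neighbour[of v2 v4 v3] v2 False V edges dist by auto
    next
      case True
      then have "v4 \<notin> K" using in_K cd_path cd(2) v2 dist by auto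
      then show False using no_outside_common_neighbour[of v3 v0 v4] True assms(2) V edges dist by auto
    qed
  qed
qed

lemma clique_edges_disjoint_5_cycle:
  assumes "simple_cycle V E vs" "length vs = 5"
  shows "cycle_edges vs \<inter> clique_edges K = {}"
proof (rule ccontr)
  assume "cycle_edges vs \<inter> clique_edges K \<noteq> {}"
  then obtain ws where ws: "simple_cycle V E ws" "length ws = 5" "ws ! 0 \<in> K" "ws ! 1 \<in> K"
    using cycle_rotate_clique_edge_to_front[OF assms(1)] assms(2) by (metis Int_emptyI)
  then obtain v0 v1 v2 v3 v4 where "ws = [v0, v1, v2, v3, v4]"
    by (auto simp: length_Suc_conv numeral_eq_Suc)
  then show False using no_5_cycle_through_clique_edge ws by simp
qed

lemma clique_edges_disjoint_triangle:
  assumes "simple_cycle V E vs" "length vs = 3" "\<not> set vs \<subseteq> K"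
  shows "cycle_edges vs \<inter> clique_edges K = {}"
proof (rule ccontr)
  assume "cycle_edges vs \<inter> clique_edges K \<noteq> {}"
  then obtain ws where ws: "simple_cycle V E ws" "length ws = 3" "set ws = set vs" "ws ! 0 \<in> K" "ws ! 1 \<in> K"
    using cycle_rotate_clique_edge_to_front[OF assms(1)] assms(2) by (metis Int_emptyI)
  then obtain a b c where abc: "ws = [a, b, c]"
    by (auto simp: length_Suc_conv numeral_eq_Suc)
  have "distinct [a, b, c]" "c \<in> V" "{b, c} \<in> E" "{c, a} \<in> E"
    using ws(1) unfolding abc by (simp_all add: simple_cycle_def cycle_edges_3)
  moreover have "a \<in> K" "b \<in> K" "c \<notin> K" using ws(3-5) assms(3) unfolding abc by auto
  ultimately show False
    using no_outside_common_neighbour[of a b c] by (simp add: insert_commute)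
qed

lemma clique_edges_disjoint_other_clique:
  assumes "four_clique V E K'" "K' \<noteq> K"
  shows "clique_edges K' \<inter> clique_edges K = {}"
proof (rule ccontr)
  assume "clique_edges K' \<inter> clique_edges K \<noteq> {}"
  then obtain u v where uv: "u \<in> K" "v \<in> K" "u \<noteq> v" "u \<in> K'" "v \<in> K'"
    unfolding clique_edges_def by (auto simp: doubleton_eq_iff)
  have "card K' = card K" "finite K" using assms(1) four_clique
    by (simp_all add: four_clique_def card_ge_0_finite)
  then have "\<not> K' \<subseteq> K" using assms(2) card_subset_eq by blast
  then obtain w where w: "w \<in> K'" "w \<notin> K" by blast
  then have "w \<in> V" "{u, w} \<in> E" "{w, v} \<in> E"
    using assms(1) uv unfolding four_clique_def by auto
  then show False using no_outside_common_neighbour uv(1-3) w(2) by blast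
qed

end

theorem lemma5p4:
  fixes V :: "'a set" and E :: "'a set set" and K :: "'a set"
  assumes "simple_graph V E"
    and "planar V E"
    and "\<forall>vs. simple_cycle V E vs \<and> length vs \<le> 10 \<longrightarrow> \<not> removable V E vs"
    and "four_clique V E K"
  shows "(\<forall>vs. simple_cycle V E vs \<and> length vs = 5 \<longrightarrow> cycle_edges vs \<inter> clique_edges K = {})
       \<and> (\<forall>K'. four_clique V E K' \<and> K' \<noteq> K \<longrightarrow> clique_edges K' \<inter> clique_edges K = {})
       \<and> (\<forall>vs. simple_cycle V E vs \<and> length vs = 3 \<and> \<not> set vs \<subseteq> K
              \<longrightarrow> cycle_edges vs \<inter> clique_edges K = {})"
  using clique_edges_disjoint_5_cycle[OF assms(2-4)] clique_edges_disjoint_other_clique[OF assms(2-4)]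
    clique_edges_disjoint_triangle[OF assms(2-4)]
  by blast

end
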